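(* Let $J$ be an abelian topological semigroup with identity $0$, $X$ a topological vector space over $\mathbf{C}$, and $\phi\in P^n(J,X)$, so that $\phi(t+ms)=\sum_{j=0}^n a_j(t,s)m^j$ for all $t,s\in J$, $m\in\mathbf{Z}_+$, with $a_j(t,s)\in X$. Then $a_n(t,s)=a_n(0,s)$ for all $t,s\in J$.
   Context: $\mathbf{Z}_+=\{0,1,2,\dots\}$. A continuous $p:J\to X$ is a polynomial of degree at most $n$ if for all $s,t\in J$ the map $m\mapsto p(s+mt)$, $m\in\mathbf{Z}_+$, is a polynomial in $m$ of degree at most $n$ with coefficients in $X$; $P^n(J,X)$ is the space of such polynomials. *)

theory Defs
  imports "HOL-Analysis.Analysis"
begin

definition complex_tvs :: "(complex \<Rightarrow> 'b::{ab_group_add,topological_space} \<Rightarrow> 'b) \<Rightarrow> bool" where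
  "complex_tvs scaleC \<longleftrightarrow>
     vector_space scaleC \<and>
     continuous_on UNIV (\<lambda>(x::'b, y::'b). x + y) \<and>
     continuous_on UNIV (\<lambda>(c::complex, x::'b). scaleC c x)"

definition nsmul :: "nat \<Rightarrow> 'a::comm_monoid_add \<Rightarrow> 'a" where
  "nsmul m t = (\<Sum>i<m. t)"

definition poly_space ::
  "(complex \<Rightarrow> 'b::{ab_group_add,topological_space} \<Rightarrow> 'b) \<Rightarrow> nat
     \<Rightarrow> ('a::{comm_monoid_add,topological_space} \<Rightarrow> 'b) set" where
  "poly_space scaleC n = {p. continuous_on UNIV p \<and>
     (\<forall>s t. \<exists>c :: nat \<Rightarrow> 'b. \<forall>m::nat.
        p (s + nsmul m t) = (\<Sum>j\<le>n. scaleC (of_nat (m ^ j)) (c j)))}"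

end

theory Submission
  imports Defs "HOL-Computational_Algebra.Polynomial"
begin

text \<open>The function \<open>(k, m) \<mapsto> \<phi>(k t + m s)\<close> is a polynomial of degree at most
  \<open>n\<close> in each variable separately, hence (by Lagrange interpolation) a polynomial
  \<open>\<Sum>\<^sub>i\<^sub>j k\<^sup>i m\<^sup>j E\<^sub>i\<^sub>j\<close> in both. On every ray \<open>k = q m\<close> it equals \<open>\<phi>(m (q t + s))\<close>, which
  has degree at most \<open>n\<close> in \<open>m\<close>; comparing coefficients first in \<open>m\<close> and then in \<open>q\<close>
  gives \<open>E\<^sub>i\<^sub>j = 0\<close> for \<open>i + j > n\<close>. So the coefficient \<open>a\<^sub>n(k t, s) = \<Sum>\<^sub>i k\<^sup>i E\<^sub>i\<^sub>n\<close> does not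
  depend on \<open>k\<close>, and \<open>k = 1\<close>, \<open>k = 0\<close> give the claim.\<close>

definition poly_seq :: "('f::semiring_1 \<Rightarrow> 'b::ab_group_add \<Rightarrow> 'b) \<Rightarrow> nat \<Rightarrow> (nat \<Rightarrow> 'b) \<Rightarrow> nat \<Rightarrow> 'b"
  where "poly_seq sc N c m = (\<Sum>j\<le>N. sc (of_nat (m ^ j)) (c j))"

definition lagrange_basis :: "nat \<Rightarrow> nat \<Rightarrow> 'f::field_char_0 poly" where
  "lagrange_basis N m =
     smult (inverse (\<Prod>r\<in>{..N}-{m}. of_nat m - of_nat r)) (\<Prod>r\<in>{..N}-{m}. [:- of_nat r, 1:])"

lemma poly_lagrange_basis:
  assumes "r \<le> N" "m \<le> N"
  shows "poly (lagrange_basis N m) (of_nat r :: 'f::field_char_0) = (if r = m then 1 else 0)"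
proof (cases "r = m")
  case True
  have "(\<Prod>r\<in>{..N}-{m}. of_nat m - of_nat r :: 'f) \<noteq> 0"
    by (subst prod_zero_iff) auto
  then show ?thesis using True by (simp add: lagrange_basis_def poly_prod)
next
  case False
  then have "r \<in> {..N}-{m}" using assms by auto
  then have "(\<Prod>r'\<in>{..N}-{m}. poly [:- of_nat r', 1:] (of_nat r :: 'f)) = 0"
    by (intro prod_zero) auto
  then show ?thesis using False by (simp add: lagrange_basis_def poly_prod)
qed

lemma degree_lagrange_basis:
  assumes "m \<le> N"
  shows "degree (lagrange_basis N m :: 'f::field_char_0 poly) \<le> N"
proof -
  have "degree (\<Prod>r\<in>{..N}-{m}. [:- of_nat r, 1:] :: 'f poly)
      \<le> sum (degree \<circ> (\<lambda>r. [:- of_nat r, 1:] :: 'f poly)) ({..N}-{m})"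
    by (rule degree_prod_sum_le) auto
  also have "\<dots> = N" using assms by simp
  finally show ?thesis
    unfolding lagrange_basis_def using degree_smult_le order_trans by blast
qed

lemma sum_lagrange_basis_power:
  assumes "i \<le> N"
  shows "(\<Sum>m\<le>N. smult (of_nat m ^ i) (lagrange_basis N m)) = (monom 1 i :: 'f::field_char_0 poly)"
proof (rule poly_eqI_degree[where A = "of_nat ` {..N}"])
  fix x assume "x \<in> (of_nat ` {..N} :: 'f set)"
  then obtain r where r: "r \<le> N" "x = of_nat r" by auto
  have "poly (\<Sum>m\<le>N. smult (of_nat m ^ i) (lagrange_basis N m)) x
      = (\<Sum>m\<le>N. if m = r then of_nat m ^ i else 0)"
    using r by (simp add: poly_sum poly_lagrange_basis if_distrib eq_commute cong: if_cong)
  also have "\<dots> = poly (monom 1 i) x"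
    using r by (simp add: poly_monom)
  finally show "poly (\<Sum>m\<le>N. smult (of_nat m ^ i) (lagrange_basis N m)) x = poly (monom 1 i) x" .
next
  have card: "card (of_nat ` {..N} :: 'f set) = Suc N"
    by (subst card_image) (auto simp: inj_on_def)
  have "degree (\<Sum>m\<le>N. smult (of_nat m ^ i) (lagrange_basis N m) :: 'f poly) \<le> N"
    by (rule degree_sum_le) (auto intro: order_trans[OF degree_smult_le] degree_lagrange_basis)
  then show "degree (\<Sum>m\<le>N. smult (of_nat m ^ i) (lagrange_basis N m) :: 'f poly)
      < card (of_nat ` {..N} :: 'f set)"
    using card by simp
  show "degree (monom 1 i :: 'f poly) < card (of_nat ` {..N} :: 'f set)"
    using card assms by (simp add: degree_monom_eq)
qed

lemma poly_seq_coeff_interpolation: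
  fixes sc :: "'f::field_char_0 \<Rightarrow> 'b::ab_group_add \<Rightarrow> 'b"
  assumes "vector_space sc" "j \<le> N"
  shows "c j = (\<Sum>m\<le>N. sc (coeff (lagrange_basis N m) j) (poly_seq sc N c m))"
proof -
  interpret vector_space sc by fact
  have "(\<Sum>m\<le>N. sc (coeff (lagrange_basis N m) j) (poly_seq sc N c m))
      = (\<Sum>m\<le>N. \<Sum>i\<le>N. sc (coeff (lagrange_basis N m) j * of_nat m ^ i) (c i))"
    by (simp add: poly_seq_def scale_sum_right)
  also have "\<dots> = (\<Sum>i\<le>N. \<Sum>m\<le>N. sc (coeff (lagrange_basis N m) j * of_nat m ^ i) (c i))"
    by (rule sum.swap)
  also have "\<dots> = (\<Sum>i\<le>N. sc (coeff (\<Sum>m\<le>N. smult (of_nat m ^ i) (lagrange_basis N m)) j) (c i))"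
    by (simp add: scale_sum_left coeff_sum mult.commute)
  also have "\<dots> = (\<Sum>i\<le>N. if i = j then c i else 0)"
    by (intro sum.cong refl) (simp add: sum_lagrange_basis_power coeff_monom)
  also have "\<dots> = c j" using assms(2) by simp
  finally show ?thesis by simp
qed

lemma poly_seq_coeff_unique:
  fixes sc :: "'f::field_char_0 \<Rightarrow> 'b::ab_group_add \<Rightarrow> 'b"
  assumes "vector_space sc" "\<forall>m. poly_seq sc N c m = poly_seq sc N d m" "j \<le> N"
  shows "c j = d j"
  using poly_seq_coeff_interpolation[OF assms(1,3), of c] poly_seq_coeff_interpolation[OF assms(1,3), of d]
    assms(2) by simp

lemma poly_seq_raise_degree:
  assumes "vector_space sc" "N \<le> M"
  shows "poly_seq sc N c m = poly_seq sc M (\<lambda>j. if j \<le> N then c j else 0) m"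
proof -
  interpret vector_space sc by fact
  have "{..N} = {j\<in>{..M}. j \<le> N}" using assms(2) by auto
  then show ?thesis
    by (simp add: poly_seq_def if_distrib sum.inter_filter[symmetric] cong: if_cong)
qed

lemma separately_poly_seq_imp_coeffs_poly_seq:
  fixes sc :: "'f::field_char_0 \<Rightarrow> 'b::ab_group_add \<Rightarrow> 'b"
  assumes vs: "vector_space sc"
    and sep: "\<forall>k m. poly_seq sc N (A k) m = poly_seq sc N (B m) k"
  shows "\<exists>E. \<forall>j\<le>N. \<forall>k. A k j = poly_seq sc N (\<lambda>i. E i j) k"
proof (intro exI allI impI)
  interpret vector_space sc by (rule vs)
  fix j k assume "j \<le> N"
  then have "A k j = (\<Sum>m\<le>N. sc (coeff (lagrange_basis N m) j) (poly_seq sc N (B m) k))"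
    using poly_seq_coeff_interpolation[OF vs, of j N "A k"] sep by simp
  also have "\<dots> = (\<Sum>m\<le>N. \<Sum>i\<le>N. sc (of_nat (k ^ i)) (sc (coeff (lagrange_basis N m) j) (B m i)))"
    by (simp add: poly_seq_def scale_sum_right mult.commute)
  also have "\<dots> = (\<Sum>i\<le>N. \<Sum>m\<le>N. sc (of_nat (k ^ i)) (sc (coeff (lagrange_basis N m) j) (B m i)))"
    by (rule sum.swap)
  also have "\<dots> = poly_seq sc N
      (\<lambda>i. \<Sum>m\<le>N. sc (coeff (lagrange_basis N m) j) (B m i)) k"
    by (simp add: poly_seq_def scale_sum_right)
  finally show "A k j = poly_seq sc N (\<lambda>i. \<Sum>m\<le>N. sc (coeff (lagrange_basis N m) j) (B m i)) k" .
qed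

lemma sum_square_by_diagonals:
  fixes f :: "nat \<Rightarrow> nat \<Rightarrow> 'a::comm_monoid_add"
  shows "(\<Sum>i\<le>n. \<Sum>j\<le>n. f i (i + j))
       = (\<Sum>d\<le>2*n. \<Sum>i\<le>n. if i \<le> d \<and> d - i \<le> n then f i d else 0)"
proof -
  have row: "(\<Sum>j\<le>n. f i (i + j)) = (\<Sum>d\<le>2*n. if i \<le> d \<and> d - i \<le> n then f i d else 0)"
    if "i \<le> n" for i
  proof -
    have "(\<Sum>j\<le>n. f i (i + j)) = sum (f i) ((+) i ` {..n})"
      by (subst sum.reindex) (auto simp: inj_on_def)
    also have "(+) i ` {..n} = {d\<in>{..2*n}. i \<le> d \<and> d - i \<le> n}"
      using that by (auto simp: image_iff) (metis atMost_iff le_add_diff_inverse)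
    also have "sum (f i) \<dots> = (\<Sum>d\<le>2*n. if i \<le> d \<and> d - i \<le> n then f i d else 0)"
      by (rule sum.inter_filter) simp
    finally show ?thesis .
  qed
  have "(\<Sum>i\<le>n. \<Sum>j\<le>n. f i (i + j))
      = (\<Sum>i\<le>n. \<Sum>d\<le>2*n. if i \<le> d \<and> d - i \<le> n then f i d else 0)"
    by (simp add: row)
  also have "\<dots> = (\<Sum>d\<le>2*n. \<Sum>i\<le>n. if i \<le> d \<and> d - i \<le> n then f i d else 0)"
    by (rule sum.swap)
  finally show ?thesis .
qed

text \<open>A bivariate polynomial of bidegree \<open>(N, N)\<close> whose restrictions to all rays \<open>k = q m\<close>
  have degree at most \<open>N\<close> has total degree at most \<open>N\<close>.\<close>

lemma poly_seq_rays_imp_total_degree: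
  fixes sc :: "'f::field_char_0 \<Rightarrow> 'b::ab_group_add \<Rightarrow> 'b"
  assumes vs: "vector_space sc"
    and rays: "\<forall>q m. poly_seq sc N (\<lambda>j. poly_seq sc N (\<lambda>i. E i j) (q * m)) m = poly_seq sc N (d q) m"
    and "i \<le> N" "j \<le> N" "N < i + j"
  shows "E i j = 0"
proof -
  interpret vector_space sc by (rule vs)
  define D where "D e i' = (if i' \<le> e \<and> e - i' \<le> N then E i' (e - i') else 0)" for e i'
  have "poly_seq sc N (\<lambda>j. poly_seq sc N (\<lambda>i. E i j) (q * m)) m
      = poly_seq sc (2*N) (\<lambda>e. poly_seq sc N (D e) q) m" for q m
  proof -
    define g where "g i e = sc (of_nat (m ^ e)) (sc (of_nat (q ^ i)) (E i (e - i)))" for i e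
    have "poly_seq sc N (\<lambda>j. poly_seq sc N (\<lambda>i. E i j) (q * m)) m = (\<Sum>j\<le>N. \<Sum>i\<le>N. g i (i + j))"
      by (simp add: g_def poly_seq_def scale_sum_right power_add power_mult_distrib mult_ac)
    also have "\<dots> = (\<Sum>i\<le>N. \<Sum>j\<le>N. g i (i + j))"
      by (rule sum.swap)
    also have "\<dots> = (\<Sum>e\<le>2*N. \<Sum>i\<le>N. if i \<le> e \<and> e - i \<le> N then g i e else 0)"
      by (rule sum_square_by_diagonals)
    also have "\<dots> = poly_seq sc (2*N) (\<lambda>e. poly_seq sc N (D e) q) m"
      by (simp add: g_def poly_seq_def D_def scale_sum_right if_distrib cong: if_cong)
    finally show ?thesis .
  qed
  then have ray_coeffs: "\<forall>m. poly_seq sc (2*N) (\<lambda>e. poly_seq sc N (D e) q) m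
      = poly_seq sc (2*N) (\<lambda>e. if e \<le> N then d q e else 0) m" for q
    using rays poly_seq_raise_degree[OF vs, of N "2*N"] by simp
  have "poly_seq sc N (D (i + j)) q = 0" for q
    using poly_seq_coeff_unique[OF vs ray_coeffs[of q], of "i + j"] assms(3-5) by simp
  then have "\<forall>q. poly_seq sc N (D (i + j)) q = poly_seq sc N (\<lambda>_. 0) q"
    by (simp add: poly_seq_def[of sc N "\<lambda>_. 0"])
  then have "D (i + j) i = 0"
    using poly_seq_coeff_unique[OF vs] assms(3) by blast
  then show ?thesis using assms(3,4) by (simp add: D_def)
qed

lemma nsmul_0 [simp]: "nsmul 0 t = 0"
  by (simp add: nsmul_def)

lemma nsmul_add_left: "nsmul (a + b) t = nsmul a t + nsmul b t"
  by (induction b) (simp_all add: nsmul_def add.assoc)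

lemma nsmul_add_right: "nsmul m (x + y) = nsmul m x + nsmul m y"
  by (induction m) (simp_all add: nsmul_def algebra_simps)

lemma nsmul_Suc: "nsmul (Suc m) t = t + nsmul m t"
  by (simp add: nsmul_def add.commute)

lemma nsmul_mult: "nsmul (a * b) t = nsmul b (nsmul a t)"
  by (induction b) (simp_all add: nsmul_add_left nsmul_Suc)

theorem lemma2p1:
  fixes scaleC :: "complex \<Rightarrow> 'b::{ab_group_add,topological_space} \<Rightarrow> 'b"
    and \<phi> :: "'a::topological_comm_monoid_add \<Rightarrow> 'b"
    and n :: nat
    and a :: "nat \<Rightarrow> 'a \<Rightarrow> 'a \<Rightarrow> 'b"
  assumes "complex_tvs scaleC"
    and "\<phi> \<in> poly_space scaleC n"
    and "\<forall>t s. \<forall>m::nat. \<phi> (t + nsmul m s) = (\<Sum>j\<le>n. scaleC (of_nat (m ^ j)) (a j t s))"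
  shows "\<forall>t s. a n t s = a n 0 s"
proof (intro allI)
  fix t s
  have vs: "vector_space scaleC" using assms(1) by (simp add: complex_tvs_def)
  interpret vector_space scaleC by (rule vs)
  have expansion: "\<phi> (u + nsmul m v) = poly_seq scaleC n (\<lambda>j. a j u v) m" for u v m
    using assms(3) by (simp add: poly_seq_def)
  have sep: "\<forall>k m. poly_seq scaleC n (\<lambda>j. a j (nsmul k t) s) m = poly_seq scaleC n (\<lambda>i. a i (nsmul m s) t) k"
    by (metis expansion add.commute)
  obtain E where E: "\<And>j k. j \<le> n \<Longrightarrow> a j (nsmul k t) s = poly_seq scaleC n (\<lambda>i. E i j) k"
    using separately_poly_seq_imp_coeffs_poly_seq[OF vs sep] by blast
  have rays: "\<forall>q m. poly_seq scaleC n (\<lambda>j. poly_seq scaleC n (\<lambda>i. E i j) (q * m)) m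
      = poly_seq scaleC n (\<lambda>j. a j 0 (nsmul q t + s)) m"
  proof (intro allI)
    fix q m
    have "nsmul (q * m) t + nsmul m s = 0 + nsmul m (nsmul q t + s)"
      by (simp add: nsmul_mult nsmul_add_right)
    then show "poly_seq scaleC n (\<lambda>j. poly_seq scaleC n (\<lambda>i. E i j) (q * m)) m
        = poly_seq scaleC n (\<lambda>j. a j 0 (nsmul q t + s)) m"
      using expansion[of "nsmul (q * m) t" m s] expansion[of 0 m "nsmul q t + s"]
      by (simp add: poly_seq_def E)
  qed
  then have "E i n = 0" if "0 < i" "i \<le> n" for i
    using poly_seq_rays_imp_total_degree[OF vs rays] that by simp
  then have "a n (nsmul k t) s = E 0 n" for k
    by (simp add: E poly_seq_def sum.atMost_shift)
  from this[of 1] this[of 0] show "a n t s = a n 0 s" by (simp add: nsmul_Suc)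
qed

end
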